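(* For every sufficiently small fixed $\varepsilon>0$ and $p=n^{-(2/5+\varepsilon)}$, asymptotically almost surely $G\sim\mathbb{G}(n,p)$ has no $K_4$-tiled subgraph on more than $\lceil 1/\varepsilon\rceil$ vertices.
   Context: A graph is $K_4$-tiled if every edge lies in a copy of $K_4$ and the auxiliary graph whose vertices are the copies of $K_4$ (two adjacent iff they share an edge) is connected. *)

theory Defs
  imports Complex_Main
begin

definition all_pairs :: "nat \<Rightarrow> nat set set" where
  "all_pairs n = {e. e \<subseteq> {0..<n} \<and> card e = 2}"

text \<open>Probability that G(n,p) (each of the pairs present independently with probability p)
  has property P; a graph is identified with its edge set.\<close>
definition gnp_prob :: "nat \<Rightarrow> real \<Rightarrow> (nat set set \<Rightarrow> bool) \<Rightarrow> real" where
  "gnp_prob n p P =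
     (\<Sum>E\<in>Pow (all_pairs n).
        if P E then p ^ card E * (1 - p) ^ (card (all_pairs n) - card E) else 0)"

definition is_K4 :: "'a set set \<Rightarrow> 'a set \<Rightarrow> bool" where
  "is_K4 F Q \<longleftrightarrow> card Q = 4 \<and> (\<forall>u\<in>Q. \<forall>v\<in>Q. u \<noteq> v \<longrightarrow> {u, v} \<in> F)"

text \<open>Auxiliary graph: copies of K4, adjacent iff they share an edge (i.e. at least 2 vertices).\<close>
definition K4_adj :: "'a set set \<Rightarrow> ('a set \<times> 'a set) set" where
  "K4_adj F = {(A, B). is_K4 F A \<and> is_K4 F B \<and> card (A \<inter> B) \<ge> 2}"

definition K4_tiled :: "'a set set \<Rightarrow> bool" where
  "K4_tiled F \<longleftrightarrow>
     (\<forall>e\<in>F. \<exists>Q. is_K4 F Q \<and> e \<subseteq> Q) \<and>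
     (\<forall>A B. is_K4 F A \<and> is_K4 F B \<longrightarrow> (A, B) \<in> (K4_adj F)\<^sup>*)"

text \<open>G (edge set E) contains a K4-tiled subgraph on more than k vertices; the subgraph
  is given by its edge set F, its vertices being the endpoints of its edges.\<close>
definition has_big_K4_tiled :: "nat \<Rightarrow> 'a set set \<Rightarrow> bool" where
  "has_big_K4_tiled k E \<longleftrightarrow> (\<exists>F. F \<subseteq> E \<and> K4_tiled F \<and> card (\<Union>F) > k)"

end

theory Submission
  imports Defs
begin

text \<open>
  A K4-tiled graph can be built up one copy of K4 at a time, each new copy sharing at least
  an edge with what is already there; so every step adds one vertex and at least three edges,
  or two vertices and at least five edges.  Starting from a single K4 (4 vertices, 6 edges),
  this gives, for every k below the order of the graph, a vertex set U with
  k < |U| \<le> k + 4 spanning at least (5|U| - 8)/2 edges.  For v = |U| there are at most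
  2^(2^v) n^v such pairs (U, H), each present in G(n,p) with probability at most
  p^((5v-8)/2), so the expected number is O(n^(8/5 + 4\<epsilon> - 5\<epsilon>v/2)).  Since
  v \<ge> 1/\<epsilon> + 1, the exponent is at most 3\<epsilon>/2 - 9/10 < 0 for \<epsilon> < 3/5.
\<close>

lemma finite_all_pairs: "finite (all_pairs n)"
  unfolding all_pairs_def by (rule finite_subset[of _ "Pow {0..<n}"]) auto

lemma sum_Pow_binomial_weights:
  fixes p q :: real
  assumes "finite A"
  shows "(\<Sum>E\<in>Pow A. p ^ card E * q ^ (card A - card E)) = (p + q) ^ card A"
proof -
  have "(p + q) ^ card A = (\<Prod>x\<in>A. p + q)" by simp
  also have "\<dots> = (\<Sum>X\<in>Pow A. (\<Prod>x\<in>X. p) * (\<Prod>x\<in>A - X. q))"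
    by (rule prod_add[OF assms])
  also have "\<dots> = (\<Sum>E\<in>Pow A. p ^ card E * q ^ (card A - card E))"
    by (rule sum.cong) (auto simp: card_Diff_subset finite_subset[OF _ assms])
  finally show ?thesis by simp
qed

lemma sum_Pow_supersets_binomial_weights:
  fixes p :: real
  assumes A: "finite A" and H: "H \<subseteq> A"
  shows "(\<Sum>E\<in>Pow A. if H \<subseteq> E then p ^ card E * (1 - p) ^ (card A - card E) else 0)
         = p ^ card H"
proof -
  have fH: "finite H" using A H finite_subset by blast
  have supersets: "{E\<in>Pow A. H \<subseteq> E} = (\<lambda>S. S \<union> H) ` Pow (A - H)"
  proof
    show "{E \<in> Pow A. H \<subseteq> E} \<subseteq> (\<lambda>S. S \<union> H) ` Pow (A - H)"
    proof
      fix E assume "E \<in> {E \<in> Pow A. H \<subseteq> E}"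
      then have "E = (E - H) \<union> H" "E - H \<in> Pow (A - H)" by auto
      then show "E \<in> (\<lambda>S. S \<union> H) ` Pow (A - H)" by blast
    qed
  qed (use H in auto)
  have weight: "p ^ card (S \<union> H) * (1 - p) ^ (card A - card (S \<union> H))
      = p ^ card H * (p ^ card S * (1 - p) ^ (card (A - H) - card S))" if S: "S \<in> Pow (A - H)" for S
  proof -
    have "card (S \<union> H) = card S + card H"
      using S fH finite_subset[OF _ A] by (subst card_Un_disjoint) auto
    moreover have "card (A - H) = card A - card H" using H fH by (simp add: card_Diff_subset)
    ultimately show ?thesis by (simp add: power_add diff_diff_add add.commute)
  qed
  have "(\<Sum>E\<in>Pow A. if H \<subseteq> E then p ^ card E * (1 - p) ^ (card A - card E) else 0)
      = (\<Sum>E\<in>{E\<in>Pow A. H \<subseteq> E}. p ^ card E * (1 - p) ^ (card A - card E))"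
    by (simp add: sum.inter_filter[OF finite_Pow_iff[THEN iffD2, OF A], symmetric])
  also have "\<dots> = (\<Sum>S\<in>Pow (A - H). p ^ card (S \<union> H) * (1 - p) ^ (card A - card (S \<union> H)))"
    unfolding supersets by (rule sum.reindex_cong[where l="\<lambda>S. S \<union> H"]) (auto simp: inj_on_def)
  also have "\<dots> = p ^ card H * (p + (1 - p)) ^ card (A - H)"
    by (simp only: sum.cong[OF refl weight] sum_distrib_left[symmetric]
        sum_Pow_binomial_weights[OF finite_Diff[OF A]])
  finally show ?thesis by simp
qed

lemma gnp_prob_True: "gnp_prob n p (\<lambda>_. True) = 1"
  unfolding gnp_prob_def using sum_Pow_binomial_weights[OF finite_all_pairs, of p "1 - p" n] by simp

lemma gnp_prob_Not: "gnp_prob n p (\<lambda>E. \<not> P E) = 1 - gnp_prob n p P"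
proof -
  have "gnp_prob n p (\<lambda>E. \<not> P E) = gnp_prob n p (\<lambda>_. True) - gnp_prob n p P"
    unfolding gnp_prob_def by (subst sum_subtractf[symmetric]) (rule sum.cong, auto)
  then show ?thesis by (simp add: gnp_prob_True)
qed

lemma gnp_prob_nonneg: "0 \<le> p \<Longrightarrow> p \<le> 1 \<Longrightarrow> 0 \<le> gnp_prob n p P"
  unfolding gnp_prob_def by (intro sum_nonneg) auto

lemma gnp_prob_union_bound:
  fixes p :: real and h :: "'b \<Rightarrow> nat set set"
  assumes W: "finite W" and p: "0 \<le> p" "p \<le> 1"
    and cover: "\<And>E. E \<subseteq> all_pairs n \<Longrightarrow> P E \<Longrightarrow> \<exists>x\<in>W. h x \<subseteq> E"
    and h: "\<And>x. x \<in> W \<Longrightarrow> h x \<subseteq> all_pairs n"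
  shows "gnp_prob n p P \<le> (\<Sum>x\<in>W. p ^ card (h x))"
proof -
  let ?A = "all_pairs n"
  let ?w = "\<lambda>E. p ^ card E * (1 - p) ^ (card ?A - card E)"
  have w_nonneg: "?w E \<ge> 0" for E :: "nat set set" using p by simp
  have P_le: "(if P E then ?w E else 0) \<le> (\<Sum>x\<in>W. if h x \<subseteq> E then ?w E else 0)"
    if E: "E \<in> Pow ?A" for E
  proof (cases "P E")
    case True
    then obtain x where x: "x \<in> W" "h x \<subseteq> E" using cover E by blast
    have "?w E = (if h x \<subseteq> E then ?w E else 0)" using x by simp
    also have "\<dots> \<le> (\<Sum>x\<in>W. if h x \<subseteq> E then ?w E else 0)"
      by (rule member_le_sum[OF x(1) _ W]) (simp add: w_nonneg)
    finally show ?thesis using True by simp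
  qed (simp add: sum_nonneg w_nonneg)
  have "gnp_prob n p P \<le> (\<Sum>E\<in>Pow ?A. \<Sum>x\<in>W. if h x \<subseteq> E then ?w E else 0)"
    unfolding gnp_prob_def by (rule sum_mono[OF P_le])
  also have "\<dots> = (\<Sum>x\<in>W. \<Sum>E\<in>Pow ?A. if h x \<subseteq> E then ?w E else 0)"
    by (rule sum.swap)
  also have "\<dots> = (\<Sum>x\<in>W. p ^ card (h x))"
    by (rule sum.cong) (auto simp: sum_Pow_supersets_binomial_weights[OF finite_all_pairs h])
  finally show ?thesis .
qed

lemma rtrancl_exits_set:
  assumes "(a, b) \<in> r\<^sup>*" "a \<in> S" "b \<notin> S"
  shows "\<exists>c d. (c, d) \<in> r \<and> c \<in> S \<and> d \<notin> S"
  using assms by (induction rule: rtrancl_induct) auto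

lemma is_K4_finite: "is_K4 F Q \<Longrightarrow> finite Q"
  unfolding is_K4_def by (intro card_ge_0_finite) simp

lemma is_K4_pair_in: "is_K4 F Q \<Longrightarrow> e \<subseteq> Q \<Longrightarrow> card e = 2 \<Longrightarrow> e \<in> F"
  unfolding is_K4_def by (auto simp: card_2_iff)

lemma is_K4_subset_Union: "is_K4 F Q \<Longrightarrow> Q \<subseteq> \<Union>F"
proof
  fix u assume K4: "is_K4 F Q" and u: "u \<in> Q"
  have "card (Q - {u}) = 3" using K4 u by (simp add: is_K4_def)
  then obtain v where "v \<in> Q" "v \<noteq> u" by (metis Diff_iff card.empty ex_in_conv insertI1 zero_neq_numeral)
  then have "{u, v} \<in> F" using K4 u by (simp add: is_K4_def)
  then show "u \<in> \<Union>F" by blast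
qed

lemma K4_tiled_edge_in_K4: "K4_tiled F \<Longrightarrow> e \<in> F \<Longrightarrow> \<exists>Q. is_K4 F Q \<and> e \<subseteq> Q"
  unfolding K4_tiled_def by blast

lemma K4_tiled_K4_adj_connected:
  "K4_tiled F \<Longrightarrow> is_K4 F A \<Longrightarrow> is_K4 F B \<Longrightarrow> (A, B) \<in> (K4_adj F)\<^sup>*"
  unfolding K4_tiled_def by blast

definition edges_within :: "'a set set \<Rightarrow> 'a set \<Rightarrow> 'a set set" where
  "edges_within F U = {e\<in>F. e \<subseteq> U}"

lemma card_pairs_not_within:
  assumes "finite D"
  shows "card {e. e \<subseteq> D \<and> card e = 2 \<and> \<not> e \<subseteq> U}
         = (card D choose 2) - (card (D \<inter> U) choose 2)"
proof -
  have pairs_split: "{e. e \<subseteq> D \<and> card e = 2}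
      = {e. e \<subseteq> D \<inter> U \<and> card e = 2} \<union> {e. e \<subseteq> D \<and> card e = 2 \<and> \<not> e \<subseteq> U}" by auto
  have "card {e. e \<subseteq> D \<and> card e = 2}
      = card {e. e \<subseteq> D \<inter> U \<and> card e = 2} + card {e. e \<subseteq> D \<and> card e = 2 \<and> \<not> e \<subseteq> U}"
    unfolding pairs_split using assms by (intro card_Un_disjoint) auto
  moreover have "card {e. e \<subseteq> D \<and> card e = 2} = card D choose 2"
    using assms by (rule n_subsets)
  moreover have "card {e. e \<subseteq> D \<inter> U \<and> card e = 2} = card (D \<inter> U) choose 2"
    using assms by (intro n_subsets) simp
  ultimately show ?thesis by simp
qed

lemma card_edges_within_Un_K4:
  assumes F: "finite F" and D: "is_K4 F D"
  shows "card (edges_within F U) + (6 - (card (D \<inter> U) choose 2)) \<le> card (edges_within F (U \<union> D))"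
proof -
  let ?N = "{e. e \<subseteq> D \<and> card e = 2 \<and> \<not> e \<subseteq> U}"
  have "card ?N = 6 - (card (D \<inter> U) choose 2)"
    using card_pairs_not_within[OF is_K4_finite[OF D]] D by (simp add: is_K4_def choose_two)
  moreover have "card (edges_within F U \<union> ?N) = card (edges_within F U) + card ?N"
    using F is_K4_finite[OF D] by (intro card_Un_disjoint) (auto simp: edges_within_def)
  moreover have "edges_within F U \<union> ?N \<subseteq> edges_within F (U \<union> D)"
    using is_K4_pair_in[OF D] by (auto simp: edges_within_def)
  then have "card (edges_within F U \<union> ?N) \<le> card (edges_within F (U \<union> D))"
    using F by (intro card_mono) (auto simp: edges_within_def)
  ultimately show ?thesis by simp
qed

definition dense_in :: "'a set set \<Rightarrow> 'a set \<Rightarrow> bool" where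
  "dense_in F U \<longleftrightarrow> 5 * card U \<le> 2 * card (edges_within F U) + 8"

lemma dense_in_K4:
  assumes "finite F" "is_K4 F A"
  shows "dense_in F A"
  using card_edges_within_Un_K4[OF assms, of "{}"] assms(2)
  by (simp add: dense_in_def edges_within_def is_K4_def choose_two)

lemma dense_in_Un_K4:
  assumes F: "finite F" and D: "is_K4 F D" and U: "finite U" "dense_in F U"
    and meet: "2 \<le> card (D \<inter> U)" "card (D \<inter> U) < 4"
  shows "dense_in F (U \<union> D)" "card (U \<union> D) = card U + (4 - card (D \<inter> U))"
proof -
  have "card (U \<union> D) = card U + card (D - U)"
    using U(1) is_K4_finite[OF D] by (subst Un_Diff_cancel[symmetric], intro card_Un_disjoint) auto
  also have "card (D - U) = 4 - card (D \<inter> U)"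
    using card_Diff_subset_Int[of D U] is_K4_finite[OF D] D by (simp add: is_K4_def Int_commute)
  finally show card_Un: "card (U \<union> D) = card U + (4 - card (D \<inter> U))" .
  have "card (D \<inter> U) = 2 \<or> card (D \<inter> U) = 3" using meet by linarith
  then have "5 * (4 - card (D \<inter> U)) \<le> 2 * (6 - (card (D \<inter> U) choose 2))"
    by (auto simp: choose_two)
  then show "dense_in F (U \<union> D)"
    using U(2) card_edges_within_Un_K4[OF F D, of U] card_Un by (simp add: dense_in_def)
qed

lemma K4_tiled_grow_dense:
  assumes F: "finite F" "K4_tiled F" and A: "is_K4 F A" "A \<subseteq> U"
    and U: "U \<subseteq> \<Union>F" "U \<noteq> \<Union>F" "finite U" "dense_in F U"
  shows "\<exists>U'. A \<subseteq> U' \<and> U' \<subseteq> \<Union>F \<and> card U < card U' \<and> card U' \<le> card U + 2 \<and>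
           dense_in F U'"
proof -
  obtain x e where "x \<notin> U" "x \<in> e" "e \<in> F" using U(1,2) by blast
  then obtain B where B: "is_K4 F B" "\<not> B \<subseteq> U" using K4_tiled_edge_in_K4[OF F(2)] by blast
  have "(A, B) \<in> (K4_adj F)\<^sup>*" using K4_tiled_K4_adj_connected[OF F(2) A(1) B(1)] .
  then have "\<exists>C D. (C, D) \<in> K4_adj F \<and> C \<in> {C. C \<subseteq> U} \<and> D \<notin> {C. C \<subseteq> U}"
    by (rule rtrancl_exits_set) (use A(2) B(2) in auto)
  then obtain C D where CD: "(C, D) \<in> K4_adj F" "C \<subseteq> U" "\<not> D \<subseteq> U" by blast
  then have D: "is_K4 F D" and "2 \<le> card (C \<inter> D)" unfolding K4_adj_def by auto
  moreover have "card (C \<inter> D) \<le> card (D \<inter> U)"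
    using CD(2) is_K4_finite[OF D] by (intro card_mono) auto
  moreover have "card (D \<inter> U) < card D"
    using CD(3) is_K4_finite[OF D] by (intro psubset_card_mono) auto
  ultimately have meet: "2 \<le> card (D \<inter> U)" "card (D \<inter> U) < 4" by (auto simp: is_K4_def)
  have "dense_in F (U \<union> D)" and card_Un: "card (U \<union> D) = card U + (4 - card (D \<inter> U))"
    using dense_in_Un_K4[OF F(1) D U(3,4) meet] by blast+
  moreover have "A \<subseteq> U \<union> D" "U \<union> D \<subseteq> \<Union>F" using A(2) U(1) is_K4_subset_Union[OF D] by auto
  moreover have "card U < card (U \<union> D)" "card (U \<union> D) \<le> card U + 2" using card_Un meet by auto
  ultimately show ?thesis by blast
qed

lemma K4_tiled_dense_subset:
  assumes F: "finite F" "K4_tiled F" and k: "k < card (\<Union>F)"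
  shows "\<exists>U. U \<subseteq> \<Union>F \<and> k < card U \<and> card U \<le> k + 4 \<and> dense_in F U"
proof -
  have "0 < card (\<Union>F)" using k by simp
  then have "\<Union>F \<noteq> {}" and fin: "finite (\<Union>F)" using card_gt_0_iff by blast+
  then obtain x e where "x \<in> e" "e \<in> F" by blast
  then obtain A where A: "is_K4 F A" using K4_tiled_edge_in_K4[OF F(2)] by blast
  have "\<exists>U. A \<subseteq> U \<and> U \<subseteq> \<Union>F \<and> j < card U \<and> card U \<le> j + 4 \<and> dense_in F U"
    if "j < card (\<Union>F)" for j
    using that
  proof (induction j)
    case 0
    have "card A = 4" using A by (simp add: is_K4_def)
    then show ?case using dense_in_K4[OF F(1) A] is_K4_subset_Union[OF A] by auto
  next
    case (Suc j)
    then have "j < card (\<Union>F)" by simp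
    then obtain U where U: "A \<subseteq> U" "U \<subseteq> \<Union>F" "j < card U" "card U \<le> j + 4" "dense_in F U"
      using Suc.IH by blast
    show ?case
    proof (cases "Suc j < card U")
      case True
      with U show ?thesis by (intro exI[of _ U]) simp
    next
      case False
      then have "card U = Suc j" using U(3) by simp
      moreover have "U \<noteq> \<Union>F" using Suc.prems \<open>card U = Suc j\<close> by auto
      moreover have "finite U" using U(2) fin by (rule finite_subset)
      ultimately obtain U' where "A \<subseteq> U'" "U' \<subseteq> \<Union>F" "card U < card U'" "card U' \<le> card U + 2"
        "dense_in F U'"
        using K4_tiled_grow_dense[OF F A U(1,2) _ _ U(5)] by blast
      with \<open>card U = Suc j\<close> show ?thesis by (intro exI[of _ U']) simp
    qed
  qed
  then show ?thesis using k by blast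
qed

lemma has_big_K4_tiled_dense_subgraph:
  assumes E: "E \<subseteq> all_pairs n" and big: "has_big_K4_tiled k E"
  shows "\<exists>U H. U \<subseteq> {0..<n} \<and> k < card U \<and> card U \<le> k + 4 \<and>
           H \<subseteq> E \<and> H \<subseteq> {e. e \<subseteq> U \<and> card e = 2} \<and> 5 * card U \<le> 2 * card H + 8"
proof -
  obtain F where F: "F \<subseteq> E" "K4_tiled F" "k < card (\<Union>F)"
    using big unfolding has_big_K4_tiled_def by blast
  have F_pairs: "F \<subseteq> all_pairs n" using F(1) E by blast
  then have "finite F" using finite_all_pairs finite_subset by blast
  then obtain U where U: "U \<subseteq> \<Union>F" "k < card U" "card U \<le> k + 4" "dense_in F U"
    using K4_tiled_dense_subset F(2,3) by blast
  have "U \<subseteq> {0..<n}" using U(1) F_pairs unfolding all_pairs_def by blast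
  moreover have "edges_within F U \<subseteq> E" using F(1) unfolding edges_within_def by blast
  moreover have "edges_within F U \<subseteq> {e. e \<subseteq> U \<and> card e = 2}"
    using F_pairs unfolding edges_within_def all_pairs_def by blast
  ultimately show ?thesis using U(2-4) unfolding dense_in_def by blast
qed

lemma powr_neg_power_le:
  fixes N a x :: real
  assumes "1 \<le> N" "0 \<le> a" "x \<le> real h"
  shows "(N powr (-a)) ^ h \<le> N powr (-a * x)"
proof -
  have "(N powr (-a)) ^ h = N powr (-a * real h)"
    using assms(1) by (simp add: powr_realpow[symmetric] powr_powr)
  also have "\<dots> \<le> N powr (-a * x)"
    using assms by (intro powr_mono) (auto simp: mult_left_mono)
  finally show ?thesis .
qed

definition dense_edge_sets :: "nat set \<Rightarrow> nat set set set" where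
  "dense_edge_sets U = {H. H \<subseteq> {e. e \<subseteq> U \<and> card e = 2} \<and> 5 * card U \<le> 2 * card H + 8}"

lemma gnp_prob_has_big_K4_tiled_le_first_moment:
  fixes p :: real
  assumes p: "0 \<le> p" "p \<le> 1"
  shows "gnp_prob n p (has_big_K4_tiled k)
         \<le> (\<Sum>v\<in>{k+1..k+4}. \<Sum>U\<in>{U. U \<subseteq> {0..<n} \<and> card U = v}.
               \<Sum>H\<in>dense_edge_sets U. p ^ card H)"
proof -
  define Us where "Us v = {U. U \<subseteq> {0..<n} \<and> card U = v}" for v
  let ?W = "SIGMA v:{k+1..k+4}. SIGMA U:Us v. dense_edge_sets U"
  have fin_Us: "finite (Us v)" for v unfolding Us_def by (rule finite_subset[of _ "Pow {0..<n}"]) auto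
  have fin_dense: "finite (dense_edge_sets U)" if "U \<in> Us v" for U v
  proof (rule finite_subset)
    show "dense_edge_sets U \<subseteq> Pow (Pow U)" unfolding dense_edge_sets_def by auto
    have "finite U" using that unfolding Us_def by (blast intro: finite_subset)
    then show "finite (Pow (Pow U))" by simp
  qed
  have "gnp_prob n p (has_big_K4_tiled k) \<le> (\<Sum>x\<in>?W. p ^ card (snd (snd x)))"
  proof (rule gnp_prob_union_bound[OF _ p])
    show "finite ?W" using fin_Us fin_dense by auto
    show "\<exists>x\<in>?W. snd (snd x) \<subseteq> E" if E: "E \<subseteq> all_pairs n" "has_big_K4_tiled k E" for E
    proof -
      obtain U H where "U \<subseteq> {0..<n}" "k < card U" "card U \<le> k + 4" "H \<subseteq> E"
        "H \<subseteq> {e. e \<subseteq> U \<and> card e = 2}" "5 * card U \<le> 2 * card H + 8"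
        using has_big_K4_tiled_dense_subgraph[OF E] by blast
      then show ?thesis by (intro bexI[of _ "(card U, U, H)"]) (auto simp: Us_def dense_edge_sets_def)
    qed
    show "snd (snd x) \<subseteq> all_pairs n" if "x \<in> ?W" for x
      using that unfolding Us_def dense_edge_sets_def all_pairs_def by fastforce
  qed
  also have "\<dots> = (\<Sum>v\<in>{k+1..k+4}. \<Sum>U\<in>Us v. \<Sum>H\<in>dense_edge_sets U. p ^ card H)"
    using fin_Us fin_dense by (simp add: sum.Sigma split_def)
  finally show ?thesis unfolding Us_def .
qed

lemma sum_dense_edge_sets_le:
  fixes N a :: real
  assumes "1 \<le> N" "0 < a" "finite U"
  shows "(\<Sum>H\<in>dense_edge_sets U. (N powr (-a)) ^ card H)
         \<le> 2 ^ (2 ^ card U) * N powr (-a * (5 * real (card U) - 8) / 2)"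
proof -
  have "(\<Sum>H\<in>dense_edge_sets U. (N powr (-a)) ^ card H)
      \<le> (\<Sum>H\<in>dense_edge_sets U. N powr (-a * ((5 * real (card U) - 8) / 2)))"
    using assms by (intro sum_mono powr_neg_power_le) (auto simp: dense_edge_sets_def)
  also have "\<dots> = real (card (dense_edge_sets U)) * N powr (-a * (5 * real (card U) - 8) / 2)"
    by simp
  also have "\<dots> \<le> 2 ^ (2 ^ card U) * N powr (-a * (5 * real (card U) - 8) / 2)"
  proof (rule mult_right_mono)
    have "card (dense_edge_sets U) \<le> card (Pow (Pow U))"
      using assms(3) by (intro card_mono) (auto simp: dense_edge_sets_def)
    then show "real (card (dense_edge_sets U)) \<le> 2 ^ (2 ^ card U)"
      using assms(3) by (simp add: card_Pow of_nat_le_iff[symmetric])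
  qed simp
  finally show ?thesis .
qed

lemma card_subsets_atLeastLessThan_le: "real (card {U. U \<subseteq> {0..<n} \<and> card U = v}) \<le> real n ^ v"
proof -
  have "card {U. U \<subseteq> {0..<n} \<and> card U = v} = n choose v" using n_subsets[of "{0..<n}" v] by simp
  also have "\<dots> \<le> n ^ v" by (cases "v \<le> n") (auto simp: binomial_le_pow binomial_eq_0)
  finally show ?thesis by (simp add: of_nat_le_iff[symmetric])
qed

lemma gnp_prob_has_big_K4_tiled_le:
  fixes a :: real
  assumes a: "0 < a" and n: "1 \<le> n"
  shows "gnp_prob n (real n powr (-a)) (has_big_K4_tiled k)
         \<le> (\<Sum>v\<in>{k+1..k+4}. 2 ^ (2 ^ v) * real n powr (real v - a * (5 * real v - 8) / 2))"
proof -
  let ?q = "\<lambda>v. real n powr (-a * (5 * real v - 8) / 2)"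
  have "real n powr (-a) \<le> 1" using powr_mono[of "-a" 0 "real n"] n a by simp
  then have "gnp_prob n (real n powr (-a)) (has_big_K4_tiled k)
      \<le> (\<Sum>v\<in>{k+1..k+4}. \<Sum>U\<in>{U. U \<subseteq> {0..<n} \<and> card U = v}.
            \<Sum>H\<in>dense_edge_sets U. (real n powr (-a)) ^ card H)"
    by (intro gnp_prob_has_big_K4_tiled_le_first_moment) simp_all
  also have "\<dots> \<le> (\<Sum>v\<in>{k+1..k+4}. \<Sum>U\<in>{U. U \<subseteq> {0..<n} \<and> card U = v}. 2 ^ (2 ^ v) * ?q v)"
  proof (intro sum_mono)
    fix v U assume "U \<in> {U. U \<subseteq> {0..<n} \<and> card U = v}"
    then have "finite U" "card U = v" by (auto intro: finite_subset)
    then show "(\<Sum>H\<in>dense_edge_sets U. (real n powr (-a)) ^ card H) \<le> 2 ^ (2 ^ v) * ?q v"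
      using sum_dense_edge_sets_le[of "real n" a U] n a by simp
  qed
  also have "\<dots> \<le> (\<Sum>v\<in>{k+1..k+4}. 2 ^ (2 ^ v) * (real n ^ v * ?q v))"
    using card_subsets_atLeastLessThan_le by (intro sum_mono) (simp add: mult_right_mono)
  also have "\<dots> = (\<Sum>v\<in>{k+1..k+4}. 2 ^ (2 ^ v) * real n powr (real v - a * (5 * real v - 8) / 2))"
    using n by (simp add: powr_realpow[symmetric] powr_add[symmetric])
  finally show ?thesis .
qed

lemma first_moment_exponent_neg:
  fixes \<epsilon> :: real
  assumes "0 < \<epsilon>" "\<epsilon> < 3/5" "1 / \<epsilon> + 1 \<le> real v"
  shows "real v - (2/5 + \<epsilon>) * (5 * real v - 8) / 2 < 0"
proof -
  have "\<epsilon> * (1 / \<epsilon> + 1) \<le> \<epsilon> * real v" using assms(1,3) by (intro mult_left_mono) auto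
  moreover have "\<epsilon> * (1 / \<epsilon> + 1) = 1 + \<epsilon>" using assms(1) by (simp add: field_simps)
  moreover have "real v - (2/5 + \<epsilon>) * (5 * real v - 8) / 2 = 8/5 + 4 * \<epsilon> - 5/2 * (\<epsilon> * real v)"
    by (simp add: field_simps)
  ultimately show ?thesis using assms(2) by linarith
qed

lemma first_moment_bound_tendsto_0:
  fixes \<epsilon> :: real
  assumes "0 < \<epsilon>" "\<epsilon> < 3/5" and k: "k = nat \<lceil>1 / \<epsilon>\<rceil>"
  shows "(\<lambda>n. \<Sum>v\<in>{k+1..k+4}. 2 ^ (2 ^ v) * real n powr (real v - (2/5 + \<epsilon>) * (5 * real v - 8) / 2))
         \<longlonglongrightarrow> 0"
proof (intro tendsto_null_sum tendsto_mult_right_zero tendsto_neg_powr filterlim_real_sequentially)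
  fix v assume "v \<in> {k+1..k+4}"
  then have "1 / \<epsilon> + 1 \<le> real v" using real_nat_ceiling_ge[of "1 / \<epsilon>"] unfolding k by auto
  then show "real v - (2/5 + \<epsilon>) * (5 * real v - 8) / 2 < 0"
    by (rule first_moment_exponent_neg[OF assms(1,2)])
qed

theorem claim7p4:
  shows "\<exists>\<epsilon>0>0. \<forall>\<epsilon>::real. 0 < \<epsilon> \<and> \<epsilon> < \<epsilon>0 \<longrightarrow>
     (\<lambda>n. gnp_prob n (real n powr (-(2/5 + \<epsilon>)))
             (\<lambda>E. \<not> has_big_K4_tiled (nat \<lceil>1 / \<epsilon>\<rceil>) E)) \<longlonglongrightarrow> 1"
proof (intro exI[of _ "3/5 :: real"] conjI allI impI)
  fix \<epsilon> :: real assume \<epsilon>: "0 < \<epsilon> \<and> \<epsilon> < 3/5"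
  define k where "k = nat \<lceil>1 / \<epsilon>\<rceil>"
  define P where "P n = gnp_prob n (real n powr (-(2/5 + \<epsilon>))) (has_big_K4_tiled k)" for n
  have "P \<longlonglongrightarrow> 0"
  proof (rule tendsto_sandwich[OF _ _ tendsto_const first_moment_bound_tendsto_0[OF _ _ k_def]])
    have "0 < 2/5 + \<epsilon>" using \<epsilon> by simp
    then have "P n \<le> (\<Sum>v\<in>{k+1..k+4}. 2 ^ (2 ^ v) * real n powr (real v - (2/5 + \<epsilon>) * (5 * real v - 8) / 2))"
      if "1 \<le> n" for n
      unfolding P_def using that by (rule gnp_prob_has_big_K4_tiled_le)
    then show "\<forall>\<^sub>F n in sequentially. P n \<le> (\<Sum>v\<in>{k+1..k+4}.
        2 ^ (2 ^ v) * real n powr (real v - (2/5 + \<epsilon>) * (5 * real v - 8) / 2))"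
      by (rule eventually_sequentiallyI)
    have "0 \<le> P n" if "1 \<le> n" for n
      unfolding P_def using that \<epsilon> powr_mono[of "-(2/5 + \<epsilon>)" 0 "real n"] by (intro gnp_prob_nonneg) auto
    then show "\<forall>\<^sub>F n in sequentially. 0 \<le> P n" by (rule eventually_sequentiallyI)
  qed (use \<epsilon> in auto)
  then have "(\<lambda>n. 1 - P n) \<longlonglongrightarrow> 1 - 0" by (intro tendsto_diff tendsto_const)
  then show "(\<lambda>n. gnp_prob n (real n powr (-(2/5 + \<epsilon>)))
             (\<lambda>E. \<not> has_big_K4_tiled (nat \<lceil>1 / \<epsilon>\<rceil>) E)) \<longlonglongrightarrow> 1"
    unfolding P_def k_def by (simp add: gnp_prob_Not)
qed simp

end
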